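(* Let $G=(V,E)$ be a connected, locally finite graph and let $\sigma^0\in\{-1,+1\}^V$. Let $\gamma$ be a finite contour with respect to $\sigma^0$, and let $\sigma\in\{-1,+1\}^V$ be the configuration with $\sigma_v=-\sigma^0_v$ for $v\in V(\gamma)$ and $\sigma_v=\sigma^0_v$ for $v\notin V(\gamma)$. Then $$H(\sigma)-H(\sigma^0)\ \geq\ \big({\rm IC}_G-2\,\delta_{\rm broken}(\sigma^0)\big)\,|\gamma|,$$ where $H(\sigma)-H(\sigma^0):=\sum_{\{v,w\}\in E}\big(\mathbf 1_{\sigma_v\neq\sigma_w}-\mathbf 1_{\sigma^0_v\neq\sigma^0_w}\big)$ (a finite sum, since only edges with an endpoint in $V(\gamma)$ contribute).
   Context: A contour with respect to $\sigma^0$ is a connected subgraph $\gamma$ of $G$ (on which the configuration is taken to be flipped relative to $\sigma^0$). $|\gamma|$ denotes the number of vertices of $\gamma$. For a finite subgraph $H$, $\partial H$ is the set of edges $(v,w)\in E$ with $v\in V(H)$, $w\notin V(H)$, and the isoperimetric constant is ${\rm IC}_G=\inf\{|\partial H|/|H|: H \text{ finite non-empty subgraph of }G\}$. For a configuration $\eta$, its broken bonds are the edges $\{v,w\}$ with $\eta_v\eta_w=-1$, and $\delta_{\rm broken}(\eta)$ is the maximum degree of a vertex in the subgraph formed by the broken bonds, i.e. the maximal number of broken bonds incident to a single vertex. *)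

theory Defs
  imports Complex_Main "HOL-Library.Extended_Real"
begin

text \<open>A simple graph on the vertex type 'a (vertex set V = UNIV),
  given by a symmetric irreflexive adjacency relation E.\<close>

definition simple_graph :: "('a \<Rightarrow> 'a \<Rightarrow> bool) \<Rightarrow> bool" where
  "simple_graph E \<longleftrightarrow> (\<forall>v w. E v w \<longrightarrow> E w v) \<and> (\<forall>v. \<not> E v v)"

definition locally_finite :: "('a \<Rightarrow> 'a \<Rightarrow> bool) \<Rightarrow> bool" where
  "locally_finite E \<longleftrightarrow> (\<forall>v. finite {w. E v w})"

definition connected_graph :: "('a \<Rightarrow> 'a \<Rightarrow> bool) \<Rightarrow> bool" where
  "connected_graph E \<longleftrightarrow> (\<forall>u v. E\<^sup>*\<^sup>* u v)"

definition connected_set :: "('a \<Rightarrow> 'a \<Rightarrow> bool) \<Rightarrow> 'a set \<Rightarrow> bool" where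
  "connected_set E S \<longleftrightarrow> S \<noteq> {} \<and>
     (\<forall>u\<in>S. \<forall>v\<in>S. (\<lambda>x y. E x y \<and> x \<in> S \<and> y \<in> S)\<^sup>*\<^sup>* u v)"

definition is_config :: "('a \<Rightarrow> int) \<Rightarrow> bool" where
  "is_config \<sigma> \<longleftrightarrow> (\<forall>v. \<sigma> v = 1 \<or> \<sigma> v = -1)"

definition edge_boundary :: "('a \<Rightarrow> 'a \<Rightarrow> bool) \<Rightarrow> 'a set \<Rightarrow> ('a \<times> 'a) set" where
  "edge_boundary E H = {(v, w). E v w \<and> v \<in> H \<and> w \<notin> H}"

text \<open>Isoperimetric constant IC_G (infimum over finite non-empty subgraphs;
  |dH| and |H| only depend on the vertex set of H).\<close>
definition iso_const :: "('a \<Rightarrow> 'a \<Rightarrow> bool) \<Rightarrow> real" where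
  "iso_const E = Inf {real (card (edge_boundary E H)) / real (card H) | H. finite H \<and> H \<noteq> {}}"

definition edges :: "('a \<Rightarrow> 'a \<Rightarrow> bool) \<Rightarrow> 'a set set" where
  "edges E = {{v, w} | v w. E v w}"

definition broken :: "('a \<Rightarrow> int) \<Rightarrow> 'a set \<Rightarrow> real" where
  "broken \<sigma> e = (if \<exists>v w. e = {v, w} \<and> \<sigma> v \<noteq> \<sigma> w then 1 else 0)"

definition broken_degree :: "('a \<Rightarrow> 'a \<Rightarrow> bool) \<Rightarrow> ('a \<Rightarrow> int) \<Rightarrow> 'a \<Rightarrow> nat" where
  "broken_degree E \<sigma> v = card {w. E v w \<and> \<sigma> v * \<sigma> w = -1}"

definition delta_broken :: "('a \<Rightarrow> 'a \<Rightarrow> bool) \<Rightarrow> ('a \<Rightarrow> int) \<Rightarrow> ereal" where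
  "delta_broken E \<sigma> = (SUP v. ereal (real (broken_degree E \<sigma> v)))"

text \<open>H(sigma) - H(sigma0) = sum over edges of (1[broken in sigma] - 1[broken in sigma0]);
  the sum is taken over the edges where the summand is nonzero (finitely many in the
  situation of the theorem), which is the same as the sum over all edges.\<close>
definition energy_diff :: "('a \<Rightarrow> 'a \<Rightarrow> bool) \<Rightarrow> ('a \<Rightarrow> int) \<Rightarrow> ('a \<Rightarrow> int) \<Rightarrow> real" where
  "energy_diff E \<sigma> \<sigma>0 =
     (\<Sum>e\<in>{e \<in> edges E. broken \<sigma> e \<noteq> broken \<sigma>0 e}. broken \<sigma> e - broken \<sigma>0 e)"

end

theory Submission
  imports Defs
begin

text \<open>Flipping \<gamma> changes the status of exactly the boundary edges of \<gamma>: a boundary edge that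
  was broken in \<sigma>0 becomes unbroken and vice versa. Hence the energy difference is the number
  of boundary edges minus twice the number of broken ones. The first count is at least
  IC_G |\<gamma>|, and every broken boundary edge is a broken bond at a vertex of \<gamma>, so the second
  count is at most \<delta>_broken(\<sigma>0) |\<gamma>|.\<close>

definition broken_boundary :: "('a \<Rightarrow> 'a \<Rightarrow> bool) \<Rightarrow> ('a \<Rightarrow> int) \<Rightarrow> 'a set \<Rightarrow> ('a \<times> 'a) set" where
  "broken_boundary E \<sigma> H = {(v, w) \<in> edge_boundary E H. \<sigma> v \<noteq> \<sigma> w}"

lemma is_configD: "is_config \<sigma> \<Longrightarrow> \<sigma> v = 1 \<or> \<sigma> v = -1"
  unfolding is_config_def by blast

lemma broken_doubleton: "broken \<sigma> {v, w} = (if \<sigma> v \<noteq> \<sigma> w then 1 else 0)"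
  unfolding broken_def by (auto simp: doubleton_eq_iff)

lemma finite_edge_boundary:
  assumes "locally_finite E" and "finite H"
  shows "finite (edge_boundary E H)"
proof (rule finite_subset)
  show "edge_boundary E H \<subseteq> Sigma H (\<lambda>v. {w. E v w})"
    unfolding edge_boundary_def by auto
  show "finite (Sigma H (\<lambda>v. {w. E v w}))"
    using assms by (auto simp: locally_finite_def)
qed

lemma inj_on_doubleton_edge_boundary: "inj_on (\<lambda>(v, w). {v, w}) (edge_boundary E H)"
  by (rule inj_onI) (auto simp: edge_boundary_def doubleton_eq_iff)

lemma flip_changes_broken_iff:
  assumes "is_config \<sigma>0" and "\<And>v. \<sigma> v = (if v \<in> \<gamma> then - \<sigma>0 v else \<sigma>0 v)"
  shows "broken \<sigma> {v, w} \<noteq> broken \<sigma>0 {v, w} \<longleftrightarrow> (v \<in> \<gamma> \<longleftrightarrow> w \<notin> \<gamma>)"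
  using is_configD[OF assms(1), of v] is_configD[OF assms(1), of w]
  by (auto simp: assms(2) broken_doubleton)

lemma edges_changed_by_flip:
  assumes "simple_graph E" and "is_config \<sigma>0"
    and "\<And>v. \<sigma> v = (if v \<in> \<gamma> then - \<sigma>0 v else \<sigma>0 v)"
  shows "{e \<in> edges E. broken \<sigma> e \<noteq> broken \<sigma>0 e} = (\<lambda>(v, w). {v, w}) ` edge_boundary E \<gamma>"
proof (intro equalityI subsetI)
  fix e assume "e \<in> {e \<in> edges E. broken \<sigma> e \<noteq> broken \<sigma>0 e}"
  then obtain v w where e: "e = {v, w}" "E v w" "v \<in> \<gamma> \<longleftrightarrow> w \<notin> \<gamma>"
    unfolding edges_def using flip_changes_broken_iff[OF assms(2,3)] by blast
  have "E w v"
    using \<open>E v w\<close> assms(1) unfolding simple_graph_def by blast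
  with e have "(v, w) \<in> edge_boundary E \<gamma> \<or> (w, v) \<in> edge_boundary E \<gamma>"
    unfolding edge_boundary_def by auto
  with e show "e \<in> (\<lambda>(v, w). {v, w}) ` edge_boundary E \<gamma>"
    by (auto simp: insert_commute)
next
  fix e assume "e \<in> (\<lambda>(v, w). {v, w}) ` edge_boundary E \<gamma>"
  then obtain v w where "e = {v, w}" "E v w" "v \<in> \<gamma>" "w \<notin> \<gamma>"
    unfolding edge_boundary_def by auto
  then show "e \<in> {e \<in> edges E. broken \<sigma> e \<noteq> broken \<sigma>0 e}"
    unfolding edges_def using flip_changes_broken_iff[OF assms(2,3)] by auto
qed

lemma energy_diff_flip:
  assumes "simple_graph E" and "locally_finite E" and "is_config \<sigma>0" and "finite \<gamma>"
    and flip: "\<And>v. \<sigma> v = (if v \<in> \<gamma> then - \<sigma>0 v else \<sigma>0 v)"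
  shows "energy_diff E \<sigma> \<sigma>0
           = real (card (edge_boundary E \<gamma>)) - 2 * real (card (broken_boundary E \<sigma>0 \<gamma>))"
proof -
  let ?B = "edge_boundary E \<gamma>" and ?Bb = "broken_boundary E \<sigma>0 \<gamma>"
  have fin: "finite ?B"
    using assms(2,4) by (rule finite_edge_boundary)
  have Bb_sub: "?Bb \<subseteq> ?B"
    unfolding broken_boundary_def by auto
  have change: "broken \<sigma> {v, w} - broken \<sigma>0 {v, w} = (if (v, w) \<in> ?Bb then -1 else 1)"
    if "(v, w) \<in> ?B" for v w
    using that flip is_configD[OF \<open>is_config \<sigma>0\<close>, of v] is_configD[OF \<open>is_config \<sigma>0\<close>, of w]
    by (auto simp: broken_doubleton broken_boundary_def edge_boundary_def)
  have "energy_diff E \<sigma> \<sigma>0 = (\<Sum>e \<in> (\<lambda>(v, w). {v, w}) ` ?B. broken \<sigma> e - broken \<sigma>0 e)"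
    unfolding energy_diff_def edges_changed_by_flip[OF assms(1,3) flip] ..
  also have "\<dots> = (\<Sum>(v, w) \<in> ?B. broken \<sigma> {v, w} - broken \<sigma>0 {v, w})"
    unfolding sum.reindex[OF inj_on_doubleton_edge_boundary] by (simp add: case_prod_unfold)
  also have "\<dots> = (\<Sum>p \<in> ?B. if p \<in> ?Bb then -1 else 1)"
    by (rule sum.cong) (auto simp: change)
  also have "\<dots> = real (card (?B - ?Bb)) - real (card ?Bb)"
    using fin Bb_sub by (simp add: sum.If_cases Int_absorb1 Diff_eq[symmetric])
  also have "\<dots> = real (card ?B) - 2 * real (card ?Bb)"
    using fin Bb_sub by (simp add: card_Diff_subset finite_subset card_mono)
  finally show ?thesis .
qed

lemma iso_const_mult_card_le:
  assumes "finite H" and "H \<noteq> {}"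
  shows "iso_const E * real (card H) \<le> real (card (edge_boundary E H))"
proof -
  have "iso_const E \<le> real (card (edge_boundary E H)) / real (card H)"
    unfolding iso_const_def
    by (rule cInf_lower) (use assms in \<open>auto intro!: bdd_belowI[where m = 0]\<close>)
  then show ?thesis
    using assms by (simp add: pos_le_divide_eq card_gt_0_iff)
qed

lemma card_broken_boundary_le_sum_broken_degree:
  assumes "locally_finite E" and "is_config \<sigma>" and "finite H"
  shows "card (broken_boundary E \<sigma> H) \<le> (\<Sum>v\<in>H. broken_degree E \<sigma> v)"
proof -
  let ?N = "\<lambda>v. {w. E v w \<and> \<sigma> v * \<sigma> w = -1}"
  have fin: "finite (?N v)" for v
    using assms(1) unfolding locally_finite_def by auto
  have "broken_boundary E \<sigma> H \<subseteq> Sigma H ?N"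
  proof (clarsimp simp: broken_boundary_def edge_boundary_def)
    fix v w assume "\<sigma> v \<noteq> \<sigma> w"
    then show "\<sigma> v * \<sigma> w = -1"
      using is_configD[OF assms(2), of v] is_configD[OF assms(2), of w] by auto
  qed
  then have "card (broken_boundary E \<sigma> H) \<le> card (Sigma H ?N)"
    by (rule card_mono[rotated]) (use assms(3) fin in auto)
  also have "\<dots> = (\<Sum>v\<in>H. broken_degree E \<sigma> v)"
    unfolding broken_degree_def using assms(3) fin by simp
  finally show ?thesis .
qed

lemma broken_degree_le_delta_broken:
  "ereal (real (broken_degree E \<sigma> v)) \<le> delta_broken E \<sigma>"
  unfolding delta_broken_def by (rule SUP_upper) simp

lemma sum_broken_degree_le:
  assumes "delta_broken E \<sigma> = ereal d"
  shows "(\<Sum>v\<in>H. real (broken_degree E \<sigma> v)) \<le> d * real (card H)"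
proof -
  have "real (broken_degree E \<sigma> v) \<le> d" for v
    using broken_degree_le_delta_broken[of E \<sigma> v] assms by simp
  then have "(\<Sum>v\<in>H. real (broken_degree E \<sigma> v)) \<le> (\<Sum>v\<in>H. d)"
    by (rule sum_mono)
  then show ?thesis
    by (simp add: mult.commute)
qed

theorem lemma3p3:
  fixes E :: "'a \<Rightarrow> 'a \<Rightarrow> bool" and \<sigma>0 \<sigma> :: "'a \<Rightarrow> int" and \<gamma> :: "'a set"
  assumes "simple_graph E" and "locally_finite E" and "connected_graph E"
    and "is_config \<sigma>0"
    and "finite \<gamma>" and "connected_set E \<gamma>"
    and "\<And>v. \<sigma> v = (if v \<in> \<gamma> then - \<sigma>0 v else \<sigma>0 v)"
  shows "ereal (energy_diff E \<sigma> \<sigma>0)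
           \<ge> (ereal (iso_const E) - 2 * delta_broken E \<sigma>0) * ereal (real (card \<gamma>))"
proof -
  let ?B = "edge_boundary E \<gamma>" and ?Bb = "broken_boundary E \<sigma>0 \<gamma>"
  have "\<gamma> \<noteq> {}"
    using \<open>connected_set E \<gamma>\<close> unfolding connected_set_def by blast
  then have card_pos: "card \<gamma> > 0"
    using \<open>finite \<gamma>\<close> by (simp add: card_gt_0_iff)
  have energy: "energy_diff E \<sigma> \<sigma>0 = real (card ?B) - 2 * real (card ?Bb)"
    using assms(1,2,4,5,7) by (rule energy_diff_flip)
  have boundary: "iso_const E * real (card \<gamma>) \<le> real (card ?B)"
    using \<open>finite \<gamma>\<close> \<open>\<gamma> \<noteq> {}\<close> by (rule iso_const_mult_card_le)
  have broken_bound: "card ?Bb \<le> (\<Sum>v\<in>\<gamma>. broken_degree E \<sigma>0 v)"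
    using assms(2,4,5) by (rule card_broken_boundary_le_sum_broken_degree)
  show ?thesis
  proof (cases "delta_broken E \<sigma>0")
    case (real d)
    have "real (card ?Bb) \<le> (\<Sum>v\<in>\<gamma>. real (broken_degree E \<sigma>0 v))"
      using broken_bound by (metis of_nat_le_iff of_nat_sum)
    also have "\<dots> \<le> d * real (card \<gamma>)"
      using real by (rule sum_broken_degree_le)
    finally have "real (card ?Bb) \<le> d * real (card \<gamma>)" .
    then show ?thesis
      using real energy boundary by (simp add: algebra_simps)
  next
    case PInf
    then show ?thesis
      using card_pos by simp
  next
    case MInf
    then show ?thesis
      using broken_degree_le_delta_broken[of E \<sigma>0] by simp
  qed
qed

end
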